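(* Let $n\ge2$, $0<R<\sqrt{\tfrac38(3n-5)(2n-3)^3}$, let $u_0$ satisfy (C1)–(C6), and let $u$ be the solution of $(\ast)$. Then $u(\cdot,t)\to u^*$ uniformly in $B_R$ as $t\to\infty$, with an exponential rate: there are $c>0$ and $\mu>0$ such that $\sup_{x\in B_R}|u(x,t)-u^*(|x|)|\le c\,e^{-\mu t}$ for all $t\ge0$.
   Context: $B_R=\{x\in\mathbb R^n:|x|<R\}$; radially symmetric functions are written as functions of $r=|x|$ and $t$, $u_r$ is the radial derivative. $\alpha:=\sqrt[3]{9n-15}$, $u^*(r):=-\alpha r^{1/3}$, $\nu:=\tfrac16\sqrt{36n^2-96n+61}$. Conditions on $u_0$: (C1) $u_0\in C^2(\overline{B_R}\setminus\{0\})$; (C2) $u_0$ radially symmetric; (C3) $u^*\ge u_0$; (C4) $\limsup_{r\searrow0}|r^{\frac32-n-\nu}(u^*(r)-u_0(r))|<\infty$; (C5) $u_0(R)=u^*(R)$; (C6) there is $C>0$ with $0\ge u_{0r}(r)\ge -Cr^{-2/3}$ for all $r\in(0,R)$. Problem $(\ast)$: $u_t=\Delta u+uu_r^3$ in $(B_R\setminus\{0\})\times(0,\infty)$, $u(0,t)=0$, $u(R,t)=u^*(R)$ for $t>0$, $u(\cdot,0)=u_0$; it has a unique classical solution $u\in C(\overline{B_R}\times[0,\infty))\cap C^{2,1}((B_R\setminus\{0\})\times(0,\infty))$ with $u_r\le0$. *)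

theory Defs
  imports "HOL-Analysis.Analysis"
begin

definition alpha :: "nat \<Rightarrow> real" where
  "alpha n = root 3 (9 * real n - 15)"

definition ustar :: "nat \<Rightarrow> real \<Rightarrow> real" where
  "ustar n r = - alpha n * root 3 r"

definition nu :: "nat \<Rightarrow> real" where
  "nu n = sqrt (36 * (real n)^2 - 96 * real n + 61) / 6"

end

theory Submission
  imports Defs
begin

text \<open>
  A comparison argument with two radial barriers. The steady state \<open>u*\<close> has strictly
  negative radial derivative, so at a first point where \<open>u\<close> would exceed it the term
  \<open>u u_r^3\<close> has the wrong sign, and \<open>u \<le> u*\<close> for all time. From below we use
  \<open>u* - c exp(-\<mu> t) \<phi>(r)\<close> with \<open>\<phi>(r) = A r^\<kappa> - r^(\<kappa>+2)\<close>, where \<open>\<kappa> = n - 3/2 + \<nu>\<close> is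
  the larger root of the indicial equation of the linearisation at \<open>u*\<close>: the linearised
  operator kills \<open>r^\<kappa>\<close> and sends \<open>-r^(\<kappa>+2)\<close> to a positive multiple of \<open>r^\<kappa>\<close>. Since the
  cubic nonlinearity is convex along decreasing profiles, the barrier is a strict
  subsolution for small \<open>\<mu>\<close>. Condition (C4) gives \<open>u* - u0 \<le> c \<phi>\<close> initially, and
  \<open>\<phi> \<le> A R^\<kappa>\<close> turns the two barriers into the exponential bound.
\<close>

lemma DERIV_local_max_second_nonpos:
  fixes g g' :: "real \<Rightarrow> real"
  assumes d: "d > 0"
    and g: "\<And>s. \<bar>s\<bar> < d \<Longrightarrow> (g has_real_derivative g' s) (at s)"
    and g': "(g' has_real_derivative D) (at 0)"
    and max: "\<And>s. \<bar>s\<bar> < d \<Longrightarrow> g s \<le> g 0"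
  shows "D \<le> 0"
proof (rule ccontr)
  assume "\<not> D \<le> 0"
  then obtain e where e: "e > 0" "\<And>h. h > 0 \<Longrightarrow> h < e \<Longrightarrow> g' 0 < g' (0 + h)"
    using DERIV_pos_inc_right[OF g'] by force
  have g'0: "g' 0 = 0"
    by (rule DERIV_local_max[OF g[of 0] d]) (use d max in auto)
  define h where "h = min d e / 2"
  have h: "0 < h" "h < d" "h < e" using d e by (auto simp: h_def)
  obtain z where z: "0 < z" "z < h" "g h - g 0 = h * g' z"
    using MVT2[of 0 h g g'] h g by force
  have "g' z > 0" using e(2)[of z] z h g'0 by simp
  then have "h * g' z > 0" using h(1) by simp
  then have "g h > g 0" using z(3) by linarith
  then show False using max[of h] h by simp
qed

lemma DERIV_nonneg_at_right_endpoint_max: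
  fixes f :: "real \<Rightarrow> real"
  assumes "(f has_real_derivative D) (at t)" "t > 0" "\<forall>s\<in>{0..t}. f s \<le> f t"
  shows "D \<ge> 0"
proof (rule ccontr)
  assume "\<not> D \<ge> 0"
  then obtain d where d: "d > 0" "\<forall>h>0. h < d \<longrightarrow> f t < f (t - h)"
    using DERIV_neg_dec_left[OF assms(1)] by force
  define h where "h = min d t / 2"
  have h: "h > 0" "h < d" "h < t" using d assms(2) by (auto simp: h_def)
  then have "f t < f (t - h)" "f (t - h) \<le> f t" using d assms(3) by auto
  then show False by simp
qed

lemma has_real_derivative_along_line:
  fixes f :: "'a::real_normed_vector \<Rightarrow> real"
  assumes "(f has_derivative Df) (at (x + s *\<^sub>R e))"
  shows "((\<lambda>s. f (x + s *\<^sub>R e)) has_real_derivative Df e) (at s)"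
proof -
  have "((\<lambda>s. x + s *\<^sub>R e) has_derivative (\<lambda>h. h *\<^sub>R e)) (at s)"
    by (auto intro!: derivative_eq_intros)
  from has_derivative_compose[OF this assms]
  have "((\<lambda>s. f (x + s *\<^sub>R e)) has_derivative (\<lambda>h. Df (h *\<^sub>R e))) (at s)"
    by (simp add: o_def)
  moreover have "(\<lambda>h. Df (h *\<^sub>R e)) = (\<lambda>h. Df e * h)"
    using linear_scale[OF has_derivative_linear[OF assms]] by auto
  ultimately show ?thesis by (simp add: has_field_derivative_def)
qed

lemma norm_along_line_has_real_derivative:
  fixes x e :: "'a::real_inner"
  assumes "x + s *\<^sub>R e \<noteq> 0"
  shows "((\<lambda>s. norm (x + s *\<^sub>R e)) has_real_derivative (x + s *\<^sub>R e) \<bullet> e / norm (x + s *\<^sub>R e)) (at s)"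
  using has_real_derivative_along_line[OF has_derivative_norm[OF assms]]
  by (simp add: sgn_div_norm inner_commute divide_inverse mult.commute)

lemma le_mult_norm_powr_if_bounded_near_0:
  fixes f :: "'a::euclidean_space \<Rightarrow> real"
  assumes k: "k > 0" and cont: "continuous_on (cball 0 R - {0}) f"
    and near0: "\<exists>M. \<forall>\<^sub>F x in at 0. \<bar>norm x powr (- k) * f x\<bar> \<le> M"
    and f0: "f 0 \<le> 0"
  shows "\<exists>C>0. \<forall>x\<in>cball 0 R. f x \<le> C * norm x powr k"
proof -
  obtain M \<delta> where \<delta>: "\<delta> > 0" and M: "\<And>x. x \<noteq> 0 \<Longrightarrow> norm x < \<delta> \<Longrightarrow> \<bar>norm x powr (- k) * f x\<bar> \<le> M"
    using near0 unfolding eventually_at by (auto simp: dist_norm)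
  define K where "K = cball 0 R - ball (0::'a) \<delta>"
  have "compact K" unfolding K_def by (intro compact_diff compact_cball open_ball)
  moreover have "continuous_on K f"
    by (rule continuous_on_subset[OF cont]) (use \<delta> in \<open>auto simp: K_def\<close>)
  ultimately have "bounded (f ` K)" by (simp add: compact_continuous_image compact_imp_bounded)
  then obtain B where "\<forall>y\<in>f ` K. \<bar>y\<bar> \<le> B" unfolding bounded_real by blast
  then have B: "f x \<le> B" if "x \<in> K" for x using that by fastforce
  define C where "C = \<bar>M\<bar> + \<bar>B\<bar> / \<delta> powr k + 1"
  have "0 \<le> \<bar>B\<bar> / \<delta> powr k" by simp
  moreover have "0 \<le> \<bar>M\<bar>" by simp
  ultimately have C: "C > 0" "\<bar>M\<bar> \<le> C" "\<bar>B\<bar> / \<delta> powr k \<le> C" unfolding C_def by linarith+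
  have "f x \<le> C * norm x powr k" if x: "x \<in> cball 0 R" for x
  proof (cases "x = 0")
    case True
    then show ?thesis using f0 by simp
  next
    case False
    show ?thesis
    proof (cases "norm x < \<delta>")
      case True
      have "f x = norm x powr k * (norm x powr (- k) * f x)"
        using False by (simp add: powr_minus field_simps)
      also have "\<dots> \<le> norm x powr k * C"
        using M[OF False True] C(2) by (intro mult_left_mono) auto
      finally show ?thesis by (simp add: mult.commute)
    next
      case far: False
      have "f x \<le> \<bar>B\<bar> / \<delta> powr k * \<delta> powr k" using B[of x] x far \<delta> by (simp add: K_def)
      also have "\<dots> \<le> C * norm x powr k"
        using C far \<delta> k by (intro mult_mono powr_mono2) auto
      finally show ?thesis .
    qed
  qed
  with C(1) show ?thesis by blast
qed

lemma eq_at_0_if_continuous_and_const_right: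
  fixes g :: "real \<Rightarrow> 'a::t2_space"
  assumes "continuous_on {0..} g" "\<forall>t>0. g t = c"
  shows "g 0 = c"
proof -
  have "(g \<longlongrightarrow> g 0) (at 0 within {0..})"
    using assms(1) by (simp add: continuous_on_def)
  then have "(g \<longlongrightarrow> g 0) (at_right 0)" by (simp add: at_within_Ici_at_right)
  moreover have "eventually (\<lambda>t. g t = c) (at_right (0::real))"
    using assms(2) by (auto simp: eventually_at_right_less eventually_at_filter)
  ultimately have "((\<lambda>t. c) \<longlongrightarrow> g 0) (at_right (0::real))"
    by (rule Lim_transform_eventually)
  then show ?thesis using tendsto_const tendsto_unique trivial_limit_at_right_real by metis
qed

lemma uniform_limit_if_exp_bound:
  fixes f :: "real \<Rightarrow> 'a \<Rightarrow> real"
  assumes \<mu>: "\<mu> > 0" and bound: "\<forall>t\<ge>0. \<forall>x\<in>S. \<bar>f t x - g x\<bar> \<le> C * exp (- \<mu> * t)"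
  shows "uniform_limit S f g at_top"
  unfolding uniform_limit_iff
proof (intro allI impI)
  fix e :: real assume "e > 0"
  have "((\<lambda>t. C * exp (- \<mu> * t)) \<longlongrightarrow> 0) at_top"
    using \<mu> by real_asymp
  then have "\<forall>\<^sub>F t in at_top. C * exp (- \<mu> * t) < e \<and> t \<ge> 0"
    using \<open>e > 0\<close> order_tendstoD(2) eventually_ge_at_top eventually_conj by blast
  then show "\<forall>\<^sub>F t in at_top. \<forall>x\<in>S. dist (f t x) (g x) < e"
    by eventually_elim (use bound in \<open>force simp: dist_real_def\<close>)
qed

lemma add_scaleR_nonzero_if_abs_less_norm:
  fixes x e :: "'a::real_normed_vector"
  assumes "\<bar>s\<bar> < norm x" "norm e = 1"
  shows "x + s *\<^sub>R e \<noteq> 0"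
proof
  assume "x + s *\<^sub>R e = 0"
  then have "norm x = \<bar>s\<bar>" using assms(2) by (simp add: eq_neg_iff_add_eq_0[symmetric])
  then show False using assms(1) by simp
qed

lemma radial_along_line_has_real_derivative:
  fixes u :: "'a::real_inner \<Rightarrow> real"
  assumes y: "x + s *\<^sub>R e \<noteq> 0"
    and G: "(G has_real_derivative G1) (at (norm (x + s *\<^sub>R e)))"
    and u: "(u has_derivative (\<lambda>h. Du \<bullet> h)) (at (x + s *\<^sub>R e))"
  shows "((\<lambda>s. G (norm (x + s *\<^sub>R e)) - u (x + s *\<^sub>R e)) has_real_derivative
      G1 * ((x + s *\<^sub>R e) \<bullet> e / norm (x + s *\<^sub>R e)) - Du \<bullet> e) (at s)"
  using DERIV_chain2[OF G norm_along_line_has_real_derivative[OF y]]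
    has_real_derivative_along_line[OF u]
  by (intro DERIV_diff)

lemma radial_along_line_has_second_derivative:
  fixes x e :: "real^'n"
  assumes x: "x \<noteq> 0"
    and G1: "(G1 has_real_derivative G2) (at (norm x))"
    and Du: "(Du has_derivative (\<lambda>h. D2 *v h)) (at x)"
  shows "((\<lambda>s. G1 (norm (x + s *\<^sub>R e)) * ((x + s *\<^sub>R e) \<bullet> e / norm (x + s *\<^sub>R e))
             - Du (x + s *\<^sub>R e) \<bullet> e)
      has_real_derivative G2 * (x \<bullet> e / norm x)\<^sup>2
        + G1 (norm x) * (e \<bullet> e - (x \<bullet> e / norm x)\<^sup>2) / norm x - (D2 *v e) \<bullet> e) (at 0)"
proof -
  define r where "r = norm x"
  have r: "r > 0" using x by (simp add: r_def)
  have N: "((\<lambda>s. norm (x + s *\<^sub>R e)) has_real_derivative x \<bullet> e / r) (at 0)"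
    using norm_along_line_has_real_derivative[of x 0 e] x by (simp add: r_def)
  have G1N: "((\<lambda>s. G1 (norm (x + s *\<^sub>R e))) has_real_derivative G2 * (x \<bullet> e / r)) (at 0)"
    by (rule DERIV_chain2[OF _ N]) (use G1 in \<open>simp add: r_def\<close>)
  have "((\<lambda>s. (x + s *\<^sub>R e) \<bullet> e) has_real_derivative e \<bullet> e) (at 0)"
    by (auto intro!: derivative_eq_intros simp: inner_add_left)
  from DERIV_divide[OF this N] r
  have Q: "((\<lambda>s. (x + s *\<^sub>R e) \<bullet> e / norm (x + s *\<^sub>R e)) has_real_derivative
      (e \<bullet> e - (x \<bullet> e / r)\<^sup>2) / r) (at 0)"
    by (simp add: r_def power2_eq_square field_simps)
  have "((\<lambda>y. Du y \<bullet> e) has_derivative (\<lambda>h. (D2 *v h) \<bullet> e)) (at (x + 0 *\<^sub>R e))"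
    using Du by (auto intro!: derivative_eq_intros)
  from has_real_derivative_along_line[OF this]
  have D: "((\<lambda>s. Du (x + s *\<^sub>R e) \<bullet> e) has_real_derivative (D2 *v e) \<bullet> e) (at 0)" .
  show ?thesis
    using DERIV_diff[OF DERIV_mult[OF G1N Q] D] r
    by (simp add: r_def power2_eq_square algebra_simps)
qed

lemma sum_axis_radial_second_derivatives:
  fixes x :: "real^'n" and D2 :: "real^'n^'n"
  assumes x: "x \<noteq> 0"
  shows "(\<Sum>i\<in>UNIV. G2 * (x $ i / norm x)\<^sup>2 + G1 * (1 - (x $ i / norm x)\<^sup>2) / norm x - D2 $ i $ i)
    = G2 + (real CARD('n) - 1) / norm x * G1 - (\<Sum>i\<in>UNIV. D2 $ i $ i)"
proof -
  define r where "r = norm x"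
  have r: "r > 0" using x by (simp add: r_def)
  have unit: "(\<Sum>i\<in>UNIV. (x $ i / r)\<^sup>2) = 1"
    using r by (simp add: r_def power_divide norm_vec_def L2_set_def sum_divide_distrib[symmetric])
  have "(\<Sum>i\<in>UNIV. G2 * (x $ i / r)\<^sup>2 + G1 * (1 - (x $ i / r)\<^sup>2) / r - D2 $ i $ i)
      = (\<Sum>i\<in>UNIV. (G2 - G1 / r) * (x $ i / r)\<^sup>2 + (G1 / r - D2 $ i $ i))"
    using r by (intro sum.cong) (auto simp: field_simps)
  also have "\<dots> = (G2 - G1 / r) * (\<Sum>i\<in>UNIV. (x $ i / r)\<^sup>2) + real CARD('n) * (G1 / r)
      - (\<Sum>i\<in>UNIV. D2 $ i $ i)"
    by (simp add: sum.distrib sum_subtractf sum_distrib_left)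
  also have "\<dots> = G2 + (real CARD('n) - 1) / r * G1 - (\<Sum>i\<in>UNIV. D2 $ i $ i)"
    unfolding unit by (simp add: algebra_simps diff_divide_distrib)
  finally show ?thesis unfolding r_def[symmetric] .
qed

lemma radial_local_max_conditions:
  fixes u :: "real^'n \<Rightarrow> real" and Du :: "real^'n \<Rightarrow> real^'n" and D2 :: "real^'n^'n"
  assumes x: "x \<noteq> 0" and d: "0 < d" "d \<le> norm x"
    and u: "\<forall>y\<in>ball x d. (u has_derivative (\<lambda>h. Du y \<bullet> h)) (at y)"
    and Du: "(Du has_derivative (\<lambda>h. D2 *v h)) (at x)"
    and G: "\<forall>\<rho>>0. (G has_real_derivative G1 \<rho>) (at \<rho>)"
    and G1: "(G1 has_real_derivative G2) (at (norm x))"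
    and max: "\<forall>y\<in>ball x d. \<sigma> * (G (norm y) - u y) \<le> \<sigma> * (G (norm x) - u x)"
  shows "\<sigma> * (G1 (norm x) - Du x \<bullet> (x /\<^sub>R norm x)) = 0"
    and "\<sigma> * (G2 + (real CARD('n) - 1) / norm x * G1 (norm x) - (\<Sum>i\<in>UNIV. D2 $ i $ i)) \<le> 0"
proof -
  have inball: "x + s *\<^sub>R e \<in> ball x d" if "\<bar>s\<bar> < d" "norm e = 1" for s e
    using that by (simp add: dist_norm)
  have nonzero: "x + s *\<^sub>R e \<noteq> 0" if "\<bar>s\<bar> < d" "norm e = 1" for s e
    using add_scaleR_nonzero_if_abs_less_norm that d by force
  have deriv: "((\<lambda>s. \<sigma> * (G (norm (x + s *\<^sub>R e)) - u (x + s *\<^sub>R e))) has_real_derivative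
      \<sigma> * (G1 (norm (x + s *\<^sub>R e)) * ((x + s *\<^sub>R e) \<bullet> e / norm (x + s *\<^sub>R e))
        - Du (x + s *\<^sub>R e) \<bullet> e)) (at s)"
    if "\<bar>s\<bar> < d" "norm e = 1" for s e
    using nonzero[OF that] G u inball[OF that]
    by (intro DERIV_cmult radial_along_line_has_real_derivative) auto
  have line_max: "\<sigma> * (G (norm (x + s *\<^sub>R e)) - u (x + s *\<^sub>R e))
      \<le> \<sigma> * (G (norm (x + 0 *\<^sub>R e)) - u (x + 0 *\<^sub>R e))"
    if "\<bar>s\<bar> < d" "norm e = 1" for s e
    using max inball[OF that] by simp
  define e0 where "e0 = x /\<^sub>R norm x"
  have e0: "norm e0 = 1" "x \<bullet> e0 = norm x"
    using x by (auto simp: e0_def dot_square_norm power2_eq_square)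
  have "\<sigma> * (G1 (norm (x + 0 *\<^sub>R e0)) * ((x + 0 *\<^sub>R e0) \<bullet> e0 / norm (x + 0 *\<^sub>R e0))
      - Du (x + 0 *\<^sub>R e0) \<bullet> e0) = 0"
    by (rule DERIV_local_max[OF deriv[OF _ e0(1)] d(1)]) (use d line_max e0(1) in auto)
  then show "\<sigma> * (G1 (norm x) - Du x \<bullet> (x /\<^sub>R norm x)) = 0"
    using e0 x by (simp add: e0_def)
  have axis: "\<sigma> * (G2 * (x $ i / norm x)\<^sup>2 + G1 (norm x) * (1 - (x $ i / norm x)\<^sup>2) / norm x
      - D2 $ i $ i) \<le> 0" for i
  proof -
    define e :: "real^'n" where "e = axis i 1"
    have e: "norm e = 1" "e \<bullet> e = 1" "x \<bullet> e = x $ i" "(D2 *v e) \<bullet> e = D2 $ i $ i"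
      by (auto simp: e_def inner_axis matrix_vector_mult_basis column_def)
    show ?thesis
      using DERIV_local_max_second_nonpos[OF d(1) deriv[OF _ e(1)]
          DERIV_cmult[OF radial_along_line_has_second_derivative[OF x G1 Du, of e]]]
        line_max[OF _ e(1)] e by simp
  qed
  have "\<sigma> * (\<Sum>i\<in>UNIV. G2 * (x $ i / norm x)\<^sup>2 + G1 (norm x) * (1 - (x $ i / norm x)\<^sup>2) / norm x
      - D2 $ i $ i) \<le> 0"
    unfolding sum_distrib_left using axis by (intro sum_nonpos) auto
  then show "\<sigma> * (G2 + (real CARD('n) - 1) / norm x * G1 (norm x) - (\<Sum>i\<in>UNIV. D2 $ i $ i)) \<le> 0"
    unfolding sum_axis_radial_second_derivatives[OF x] .
qed

lemma parabolic_maximum_principle: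
  fixes w :: "'a::euclidean_space \<Rightarrow> real \<Rightarrow> real"
  assumes R: "R > 0"
    and cont: "continuous_on (cball 0 R \<times> {0..}) (\<lambda>(x, t). w x t)"
    and init: "\<forall>x\<in>cball 0 R. w x 0 \<le> 0"
    and origin: "\<forall>t>0. w 0 t \<le> 0"
    and bdry: "\<forall>t>0. \<forall>x. norm x = R \<longrightarrow> w x t \<le> 0"
    and no_first_max: "\<And>x t. x \<in> ball 0 R \<Longrightarrow> x \<noteq> 0 \<Longrightarrow> t > 0 \<Longrightarrow> w x t > 0 \<Longrightarrow>
       \<forall>y\<in>cball 0 R. \<forall>s\<in>{0..t}. w y s \<le> w x t \<Longrightarrow> False"
  shows "\<forall>x\<in>cball 0 R. \<forall>t\<ge>0. w x t \<le> 0"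
proof (intro ballI allI impI, rule ccontr)
  fix x0 t0 assume x0: "x0 \<in> cball 0 R" and t0: "t0 \<ge> 0" and pos0: "\<not> w x0 t0 \<le> 0"
  define K where "K = cball (0::'a) R \<times> {0..t0}"
  have "compact K" "K \<noteq> {}" using x0 t0 R by (auto simp: K_def intro!: compact_Times)
  moreover have "continuous_on K (\<lambda>(x, t). w x t)"
    by (rule continuous_on_subset[OF cont]) (auto simp: K_def)
  ultimately obtain p where p: "p \<in> K" "\<forall>q\<in>K. (\<lambda>(x, t). w x t) q \<le> (\<lambda>(x, t). w x t) p"
    using continuous_attains_sup by blast
  obtain x t where xt: "p = (x, t)" by (cases p)
  have x: "x \<in> cball 0 R" and t: "0 \<le> t" "t \<le> t0" using p(1) by (auto simp: xt K_def)
  have max: "\<forall>y\<in>cball 0 R. \<forall>s\<in>{0..t0}. w y s \<le> w x t" using p(2) by (auto simp: xt K_def)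
  have pos: "w x t > 0" using max x0 t0 pos0 by force
  then have "t > 0" using init x t by (cases "t = 0") force+
  moreover have "x \<noteq> 0" using origin \<open>t > 0\<close> pos by auto
  moreover have "x \<in> ball 0 R" using bdry \<open>t > 0\<close> pos x by (cases "norm x = R") force+
  moreover have "\<forall>y\<in>cball 0 R. \<forall>s\<in>{0..t}. w y s \<le> w x t" using max t by auto
  ultimately show False using no_first_max pos by blast
qed

lemma continuous_on_radial_profile:
  fixes W :: "real \<Rightarrow> real \<Rightarrow> real"
  assumes "continuous_on ({0..} \<times> {0..R}) (\<lambda>(t, \<rho>). W t \<rho>)"
  shows "continuous_on (cball 0 R \<times> {0..}) (\<lambda>(x::'a::real_normed_vector, t). W t (norm x))"
proof -
  have "continuous_on (cball 0 R \<times> {0..}) ((\<lambda>(t, \<rho>). W t \<rho>) \<circ> (\<lambda>(x::'a, t). (t, norm x)))"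
    by (rule continuous_on_compose[OF _ continuous_on_subset[OF assms]])
      (auto simp: case_prod_beta intro!: continuous_intros)
  then show ?thesis by (simp add: case_prod_beta o_def)
qed

locale classical_solution =
  fixes R :: real
    and u :: "real^'n \<Rightarrow> real \<Rightarrow> real"
    and Du :: "real^'n \<Rightarrow> real \<Rightarrow> real^'n"
    and D2u :: "real^'n \<Rightarrow> real \<Rightarrow> real^'n^'n"
    and ut :: "real^'n \<Rightarrow> real \<Rightarrow> real"
  assumes R_pos: "0 < R"
    and u_cont: "continuous_on (cball 0 R \<times> {0..}) (\<lambda>(x, t). u x t)"
    and u_diff: "\<forall>x t. x \<in> ball 0 R - {0} \<and> t > 0 \<longrightarrow>
               ((\<lambda>y. u y t) has_derivative (\<lambda>h. Du x t \<bullet> h)) (at x) \<and>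
               ((\<lambda>y. Du y t) has_derivative (\<lambda>h. D2u x t *v h)) (at x) \<and>
               ((\<lambda>s. u x s) has_real_derivative ut x t) (at t)"
    and pde: "\<forall>x t. x \<in> ball 0 R - {0} \<and> t > 0 \<longrightarrow>
               ut x t = (\<Sum>i\<in>UNIV. D2u x t $ i $ i) + u x t * (Du x t \<bullet> (x /\<^sub>R norm x)) ^ 3"
begin

lemma touching_point_conditions:
  fixes W :: "real \<Rightarrow> real \<Rightarrow> real"
  assumes x: "x \<in> ball 0 R" "x \<noteq> 0" and t: "t > 0" and \<sigma>: "\<sigma> \<noteq> 0"
    and W_r: "\<forall>\<rho>>0. (W t has_real_derivative Wr \<rho>) (at \<rho>)"
    and W_rr: "(Wr has_real_derivative Wrr) (at (norm x))"
    and W_t: "((\<lambda>s. W s (norm x)) has_real_derivative Wt) (at t)"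
    and max: "\<forall>y\<in>cball 0 R. \<forall>s\<in>{0..t}. \<sigma> * (W s (norm y) - u y s) \<le> \<sigma> * (W t (norm x) - u x t)"
  shows "Wr (norm x) = Du x t \<bullet> (x /\<^sub>R norm x)"
    and "\<sigma> * (Wrr + (real CARD('n) - 1) / norm x * Wr (norm x) - (\<Sum>i\<in>UNIV. D2u x t $ i $ i)) \<le> 0"
    and "\<sigma> * (Wt - ut x t) \<ge> 0"
proof -
  define d where "d = min (norm x) (R - norm x)"
  have d: "0 < d" "d \<le> norm x" using x by (auto simp: d_def)
  have ball: "ball x d \<subseteq> ball 0 R - {0}"
  proof
    fix y assume "y \<in> ball x d"
    then have "norm (x - y) < norm x" "norm (x - y) < R - norm x" by (auto simp: d_def dist_norm)
    moreover have "norm y \<le> norm x + norm (x - y)" "norm x \<le> norm y + norm (x - y)"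
      using norm_triangle_ineq4[of x "x - y"] norm_triangle_sub[of x y] by simp_all
    ultimately show "y \<in> ball 0 R - {0}" by auto
  qed
  have u_x: "\<forall>y\<in>ball x d. ((\<lambda>y. u y t) has_derivative (\<lambda>h. Du y t \<bullet> h)) (at y)"
    using u_diff ball t by blast
  have Du_x: "((\<lambda>y. Du y t) has_derivative (\<lambda>h. D2u x t *v h)) (at x)"
    using u_diff x t by blast
  have max_x: "\<forall>y\<in>ball x d. \<sigma> * (W t (norm y) - u y t) \<le> \<sigma> * (W t (norm x) - u x t)"
    using max ball t by fastforce
  note spatial = radial_local_max_conditions[OF x(2) d u_x Du_x W_r W_rr max_x]
  show "Wr (norm x) = Du x t \<bullet> (x /\<^sub>R norm x)"
    using spatial(1) \<sigma> by simp
  show "\<sigma> * (Wrr + (real CARD('n) - 1) / norm x * Wr (norm x) - (\<Sum>i\<in>UNIV. D2u x t $ i $ i)) \<le> 0"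
    using spatial(2) .
  have "((\<lambda>s. \<sigma> * (W s (norm x) - u x s)) has_real_derivative \<sigma> * (Wt - ut x t)) (at t)"
    using u_diff x t by (intro DERIV_cmult DERIV_diff W_t) auto
  then show "\<sigma> * (Wt - ut x t) \<ge> 0"
    by (rule DERIV_nonneg_at_right_endpoint_max[OF _ t]) (use max x in auto)
qed

lemma subsolution_le_solution:
  fixes W Wr Wrr Wt :: "real \<Rightarrow> real \<Rightarrow> real"
  assumes W_cont: "continuous_on ({0..} \<times> {0..R}) (\<lambda>(t, \<rho>). W t \<rho>)"
    and W_r: "\<forall>t>0. \<forall>\<rho>>0. (W t has_real_derivative Wr t \<rho>) (at \<rho>)"
    and W_rr: "\<forall>t>0. \<forall>\<rho>>0. (Wr t has_real_derivative Wrr t \<rho>) (at \<rho>)"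
    and W_t: "\<forall>t>0. \<forall>\<rho>>0. ((\<lambda>s. W s \<rho>) has_real_derivative Wt t \<rho>) (at t)"
    and sub: "\<forall>t>0. \<forall>\<rho>\<in>{0<..<R}.
      Wt t \<rho> < Wrr t \<rho> + (real CARD('n) - 1) / \<rho> * Wr t \<rho> + W t \<rho> * (Wr t \<rho>)^3"
    and decreasing: "\<forall>t>0. \<forall>\<rho>\<in>{0<..<R}. Wr t \<rho> \<le> 0"
    and init: "\<forall>x\<in>cball 0 R. W 0 (norm x) \<le> u x 0"
    and origin: "\<forall>t>0. W t 0 \<le> u 0 t"
    and bdry: "\<forall>t>0. \<forall>x. norm x = R \<longrightarrow> W t R \<le> u x t"
  shows "\<forall>x\<in>cball 0 R. \<forall>t\<ge>0. W t (norm x) \<le> u x t"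
proof -
  have "\<forall>x\<in>cball 0 R. \<forall>t\<ge>0. W t (norm x) - u x t \<le> 0"
  proof (rule parabolic_maximum_principle[OF R_pos])
    show "continuous_on (cball 0 R \<times> {0..}) (\<lambda>(x, t). W t (norm x) - u x t)"
      using continuous_on_diff[OF continuous_on_radial_profile[OF W_cont] u_cont]
      by (simp add: case_prod_beta)
  next
    fix x :: "real^'n" and t :: real
    assume x: "x \<in> ball 0 R" "x \<noteq> 0" and t: "t > 0" and pos: "W t (norm x) - u x t > 0"
      and max: "\<forall>y\<in>cball 0 R. \<forall>s\<in>{0..t}. W s (norm y) - u y s \<le> W t (norm x) - u x t"
    define r where "r = norm x"
    have r: "0 < r" "r < R" using x by (auto simp: r_def)
    note touch = touching_point_conditions[of x t 1 W "Wr t" "Wrr t r" "Wt t r", folded r_def]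
    have b: "Wr t r = Du x t \<bullet> (x /\<^sub>R norm x)"
      and lap: "Wrr t r + (real CARD('n) - 1) / r * Wr t r \<le> (\<Sum>i\<in>UNIV. D2u x t $ i $ i)"
      and time: "ut x t \<le> Wt t r"
      using touch x t r W_r W_rr W_t max by (auto simp: r_def)
    have "ut x t = (\<Sum>i\<in>UNIV. D2u x t $ i $ i) + u x t * (Wr t r)^3"
      using pde x t b by simp
    \<comment> \<open>at the touching point \<open>u < W\<close> and \<open>u_r = W_r \<le> 0\<close>, so \<open>u u_r^3 \<ge> W W_r^3\<close>\<close>
    moreover have "(W t r - u x t) * (Wr t r)^3 \<le> 0"
      using pos decreasing t r by (simp add: r_def mult_nonneg_nonpos power_odd_eq)
    ultimately show False using sub t r lap time by (force simp: algebra_simps)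
  qed (use init origin bdry in auto)
  then show ?thesis by simp
qed

lemma solution_le_supersolution:
  fixes W Wr Wrr Wt :: "real \<Rightarrow> real \<Rightarrow> real"
  assumes W_cont: "continuous_on ({0..} \<times> {0..R}) (\<lambda>(t, \<rho>). W t \<rho>)"
    and W_r: "\<forall>t>0. \<forall>\<rho>>0. (W t has_real_derivative Wr t \<rho>) (at \<rho>)"
    and W_rr: "\<forall>t>0. \<forall>\<rho>>0. (Wr t has_real_derivative Wrr t \<rho>) (at \<rho>)"
    and W_t: "\<forall>t>0. \<forall>\<rho>>0. ((\<lambda>s. W s \<rho>) has_real_derivative Wt t \<rho>) (at t)"
    and super: "\<forall>t>0. \<forall>\<rho>\<in>{0<..<R}.
      Wt t \<rho> \<ge> Wrr t \<rho> + (real CARD('n) - 1) / \<rho> * Wr t \<rho> + W t \<rho> * (Wr t \<rho>)^3"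
    and decreasing: "\<forall>t>0. \<forall>\<rho>\<in>{0<..<R}. Wr t \<rho> < 0"
    and init: "\<forall>x\<in>cball 0 R. u x 0 \<le> W 0 (norm x)"
    and origin: "\<forall>t>0. u 0 t \<le> W t 0"
    and bdry: "\<forall>t>0. \<forall>x. norm x = R \<longrightarrow> u x t \<le> W t R"
  shows "\<forall>x\<in>cball 0 R. \<forall>t\<ge>0. u x t \<le> W t (norm x)"
proof -
  have "\<forall>x\<in>cball 0 R. \<forall>t\<ge>0. u x t - W t (norm x) \<le> 0"
  proof (rule parabolic_maximum_principle[OF R_pos])
    show "continuous_on (cball 0 R \<times> {0..}) (\<lambda>(x, t). u x t - W t (norm x))"
      using continuous_on_diff[OF u_cont continuous_on_radial_profile[OF W_cont]]
      by (simp add: case_prod_beta)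
  next
    fix x :: "real^'n" and t :: real
    assume x: "x \<in> ball 0 R" "x \<noteq> 0" and t: "t > 0" and pos: "u x t - W t (norm x) > 0"
      and max: "\<forall>y\<in>cball 0 R. \<forall>s\<in>{0..t}. u y s - W s (norm y) \<le> u x t - W t (norm x)"
    define r where "r = norm x"
    have r: "0 < r" "r < R" using x by (auto simp: r_def)
    note touch = touching_point_conditions[of x t "-1" W "Wr t" "Wrr t r" "Wt t r", folded r_def]
    have b: "Wr t r = Du x t \<bullet> (x /\<^sub>R norm x)"
      and lap: "(\<Sum>i\<in>UNIV. D2u x t $ i $ i) \<le> Wrr t r + (real CARD('n) - 1) / r * Wr t r"
      and time: "Wt t r \<le> ut x t"
      using touch x t r W_r W_rr W_t max by (auto simp: r_def)
    have "ut x t = (\<Sum>i\<in>UNIV. D2u x t $ i $ i) + u x t * (Wr t r)^3"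
      using pde x t b by simp
    moreover have "(u x t - W t r) * (Wr t r)^3 < 0"
      using pos decreasing t r by (simp add: r_def mult_pos_neg power_odd_eq)
    ultimately show False using super t r lap time by (force simp: algebra_simps)
  qed (use init origin bdry in auto)
  then show ?thesis by simp
qed

end

definition ustar_r :: "nat \<Rightarrow> real \<Rightarrow> real" where
  "ustar_r n \<rho> = - alpha n / (3 * root 3 \<rho> ^ 2)"

definition ustar_rr :: "nat \<Rightarrow> real \<Rightarrow> real" where
  "ustar_rr n \<rho> = 2 * alpha n / (9 * root 3 \<rho> ^ 5)"

lemma alpha_cube: "alpha n ^ 3 = 9 * real n - 15"
  by (simp add: alpha_def odd_real_root_pow)

lemma alpha_pos: "n \<ge> 2 \<Longrightarrow> alpha n > 0"
  by (simp add: alpha_def)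

lemma continuous_ustar: "continuous_on UNIV (ustar n)"
  unfolding ustar_def by (auto intro!: continuous_intros continuous_on_real_root)

lemma root3_has_real_derivative:
  "\<rho> > 0 \<Longrightarrow> (root 3 has_real_derivative 1 / (3 * root 3 \<rho> ^ 2)) (at \<rho>)"
  using DERIV_real_root[of 3 \<rho>] by (simp add: inverse_eq_divide power2_eq_square)

lemma ustar_has_real_derivative:
  "\<rho> > 0 \<Longrightarrow> (ustar n has_real_derivative ustar_r n \<rho>) (at \<rho>)"
  unfolding ustar_def[abs_def] ustar_r_def
  using DERIV_cmult[OF root3_has_real_derivative, of \<rho> "- alpha n"] by simp

lemma ustar_r_has_real_derivative:
  assumes "\<rho> > 0"
  shows "(ustar_r n has_real_derivative ustar_rr n \<rho>) (at \<rho>)"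
proof -
  define w where "w = root 3 \<rho>"
  have w: "w > 0" using assms by (simp add: w_def)
  have "((\<lambda>w. - alpha n / (3 * w ^ 2)) has_real_derivative 2 * alpha n / (3 * w ^ 3)) (at w)"
    using w by (auto intro!: derivative_eq_intros simp: power2_eq_square power3_eq_cube)
  from DERIV_chain2[OF this[unfolded w_def] root3_has_real_derivative[OF assms]]
  have "(ustar_r n has_real_derivative 2 * alpha n / (3 * w ^ 3) * (1 / (3 * w ^ 2))) (at \<rho>)"
    unfolding ustar_r_def[abs_def] w_def .
  moreover have "2 * alpha n / (3 * w ^ 3) * (1 / (3 * w ^ 2)) = ustar_rr n \<rho>"
    unfolding ustar_rr_def w_def[symmetric] by (simp add: power_add[symmetric])
  ultimately show ?thesis by simp
qed

lemma ustar_r_neg: "n \<ge> 2 \<Longrightarrow> \<rho> > 0 \<Longrightarrow> ustar_r n \<rho> < 0"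
  using alpha_pos[of n] by (simp add: ustar_r_def)

lemma ustar_in_root_coordinates:
  assumes "\<rho> > 0"
  obtains w where "w > 0" "\<rho> = w ^ 3" "ustar n \<rho> = - alpha n * w"
    "ustar_r n \<rho> = - alpha n / (3 * w\<^sup>2)" "ustar_rr n \<rho> = 2 * alpha n / (9 * w ^ 5)"
  using assms by (intro that[of "root 3 \<rho>"]) (auto simp: odd_real_root_pow ustar_def ustar_r_def ustar_rr_def)

lemma ustar_steady:
  assumes "\<rho> > 0"
  shows "ustar_rr n \<rho> + (real n - 1) / \<rho> * ustar_r n \<rho> + ustar n \<rho> * ustar_r n \<rho> ^ 3 = 0"
proof -
  obtain w where w: "w > 0" "\<rho> = w ^ 3" and u: "ustar n \<rho> = - alpha n * w"
    "ustar_r n \<rho> = - alpha n / (3 * w\<^sup>2)" "ustar_rr n \<rho> = 2 * alpha n / (9 * w ^ 5)"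
    using ustar_in_root_coordinates[OF assms] .
  have "ustar n \<rho> * ustar_r n \<rho> ^ 3 = alpha n * alpha n ^ 3 / (27 * w ^ 5)"
    using w(1) unfolding u by (simp add: power_divide field_simps power3_eq_cube eval_nat_numeral)
  also have "\<dots> = alpha n / w ^ 5 * ((9 * real n - 15) / 27)" unfolding alpha_cube by simp
  finally have c: "ustar n \<rho> * ustar_r n \<rho> ^ 3 = alpha n / w ^ 5 * ((9 * real n - 15) / 27)" .
  have b: "(real n - 1) / \<rho> * ustar_r n \<rho> = alpha n / w ^ 5 * (- (real n - 1) / 3)"
    using w(1) unfolding u(2) unfolding w(2) by (simp add: field_simps eval_nat_numeral)
  have a: "ustar_rr n \<rho> = alpha n / w ^ 5 * (2 / 9)" unfolding u by simp
  show ?thesis unfolding a b c using w(1) by (simp add: field_simps)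
qed

lemma ustar_linearization_coefficients:
  assumes "\<rho> > 0"
  shows "3 * ustar n \<rho> * ustar_r n \<rho> ^ 2 = - (3 * real n - 5) / \<rho>"
    and "ustar_r n \<rho> ^ 3 = - (3 * real n - 5) / (9 * \<rho>\<^sup>2)"
proof -
  obtain w where w: "w > 0" "\<rho> = w ^ 3" and u: "ustar n \<rho> = - alpha n * w"
    "ustar_r n \<rho> = - alpha n / (3 * w\<^sup>2)"
    using ustar_in_root_coordinates[OF assms] .
  show "3 * ustar n \<rho> * ustar_r n \<rho> ^ 2 = - (3 * real n - 5) / \<rho>"
    using w alpha_cube[of n] unfolding u by (simp add: field_simps power2_eq_square power3_eq_cube)
  show "ustar_r n \<rho> ^ 3 = - (3 * real n - 5) / (9 * \<rho>\<^sup>2)"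
    using w alpha_cube[of n] unfolding u by (simp add: field_simps power2_eq_square power3_eq_cube)
qed

text \<open>The exponent of (C4): the larger root of the indicial equation of the linearisation at \<open>u*\<close>.\<close>

definition kappa :: "nat \<Rightarrow> real" where
  "kappa n = real n - 3 / 2 + nu n"

lemma nu_radicand_nonneg:
  assumes "n \<ge> 2"
  shows "0 \<le> 36 * (real n)\<^sup>2 - 96 * real n + 61"
proof -
  have "36 * (real n)\<^sup>2 - 96 * real n + 61 = 36 * (real n - 2)\<^sup>2 + 48 * (real n - 2) + 13"
    by (simp add: power2_eq_square algebra_simps)
  moreover have "0 \<le> 36 * (real n - 2)\<^sup>2" "0 \<le> 48 * (real n - 2)" using assms by auto
  ultimately show ?thesis by linarith
qed

lemma nu_nonneg: "n \<ge> 2 \<Longrightarrow> nu n \<ge> 0"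
  using nu_radicand_nonneg by (simp add: nu_def)

lemma kappa_pos: "n \<ge> 2 \<Longrightarrow> kappa n > 0"
  using nu_nonneg[of n] by (simp add: kappa_def)

lemma kappa_quadratic:
  assumes "n \<ge> 2"
  shows "(kappa n)\<^sup>2 - (2 * real n - 3) * kappa n - (3 * real n - 5) / 9 = 0"
proof -
  have "(nu n)\<^sup>2 = (36 * (real n)\<^sup>2 - 96 * real n + 61) / 36"
    using nu_radicand_nonneg[OF assms] by (simp add: nu_def power_divide)
  then show ?thesis by (simp add: kappa_def power2_eq_square field_simps)
qed

lemma kappa_gap: "n \<ge> 2 \<Longrightarrow> 4 * kappa n - 4 * real n + 10 \<ge> 4"
  using nu_nonneg[of n] by (simp add: kappa_def)

definition profile :: "real \<Rightarrow> real \<Rightarrow> real \<Rightarrow> real" where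
  "profile A k \<rho> = A * \<rho> powr k - \<rho> powr (k + 2)"

definition profile_r :: "real \<Rightarrow> real \<Rightarrow> real \<Rightarrow> real" where
  "profile_r A k \<rho> = A * k * \<rho> powr (k - 1) - (k + 2) * \<rho> powr (k + 1)"

definition profile_rr :: "real \<Rightarrow> real \<Rightarrow> real \<Rightarrow> real" where
  "profile_rr A k \<rho> = A * k * (k - 1) * \<rho> powr (k - 2) - (k + 2) * (k + 1) * \<rho> powr k"

lemma profile_has_real_derivative:
  "\<rho> > 0 \<Longrightarrow> (profile A k has_real_derivative profile_r A k \<rho>) (at \<rho>)"
  unfolding profile_def[abs_def] profile_r_def
  by (auto intro!: derivative_eq_intros simp: algebra_simps)

lemma profile_r_has_real_derivative:
  "\<rho> > 0 \<Longrightarrow> (profile_r A k has_real_derivative profile_rr A k \<rho>) (at \<rho>)"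
  unfolding profile_r_def[abs_def] profile_rr_def
  by (auto intro!: derivative_eq_intros simp: algebra_simps)

lemma continuous_on_profile: "k > 0 \<Longrightarrow> continuous_on {0..} (profile A k)"
  unfolding profile_def[abs_def] by (auto intro!: continuous_intros continuous_on_powr')

lemma profile_factored:
  assumes "\<rho> > 0"
  shows "profile A k \<rho> = \<rho> powr k * (A - \<rho>\<^sup>2)"
    and "profile_r A k \<rho> = \<rho> powr k / \<rho> * (A * k - (k + 2) * \<rho>\<^sup>2)"
    and "profile_rr A k \<rho> = \<rho> powr k / \<rho>\<^sup>2 * (A * k * (k - 1) - (k + 2) * (k + 1) * \<rho>\<^sup>2)"
  using assms
  by (simp_all add: profile_def profile_r_def profile_rr_def powr_add powr_diff algebra_simps
      powr_realpow[of \<rho> 2, simplified] power2_eq_square)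

text \<open>The operator below is the linearisation of \<open>v'' + (N - 1)/r v' + v v'^3\<close> at \<open>u*\<close>
  (coefficients from \<open>ustar_linearization_coefficients\<close>).\<close>

lemma profile_linearized:
  fixes N :: real
  assumes \<rho>: "\<rho> > 0" and k: "k\<^sup>2 - (2 * N - 3) * k - (3 * N - 5) / 9 = 0"
  shows "profile_rr A k \<rho> - (2 * N - 4) / \<rho> * profile_r A k \<rho> - (3 * N - 5) / (9 * \<rho>\<^sup>2) * profile A k \<rho>
    = - (4 * k - 4 * N + 10) * \<rho> powr k"
proof -
  have "q / \<rho>\<^sup>2 * (A * k * (k - 1) - (k + 2) * (k + 1) * \<rho>\<^sup>2)
      - (2 * N - 4) / \<rho> * (q / \<rho> * (A * k - (k + 2) * \<rho>\<^sup>2)) - (3 * N - 5) / (9 * \<rho>\<^sup>2) * (q * (A - \<rho>\<^sup>2))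
      = q * ((A / \<rho>\<^sup>2 - 1) * (k\<^sup>2 - (2 * N - 3) * k - (3 * N - 5) / 9) - (4 * k - 4 * N + 10))" for q
    using \<rho> by (simp add: field_simps power2_eq_square)
  from this[of "\<rho> powr k"] show ?thesis unfolding profile_factored[OF \<rho>] k by simp
qed

lemma profile_lower_bound:
  assumes "0 \<le> \<rho>" "\<rho> \<le> R" "k > 0"
  shows "\<rho> powr k * (A - R\<^sup>2) \<le> profile A k \<rho>"
proof (cases "\<rho> = 0")
  case False
  then have "\<rho> > 0" using assms by simp
  moreover have "\<rho>\<^sup>2 \<le> R\<^sup>2" using assms by (simp add: power_mono)
  ultimately show ?thesis by (simp add: profile_factored mult_left_mono)
qed (use assms in \<open>simp add: profile_def\<close>)

lemma profile_nonneg: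
  assumes "0 \<le> \<rho>" "\<rho> \<le> R" "k > 0" "(k + 2) * R\<^sup>2 \<le> A * k"
  shows "0 \<le> profile A k \<rho>"
proof -
  have "(k + 2) * R\<^sup>2 = k * R\<^sup>2 + 2 * R\<^sup>2" "0 \<le> 2 * R\<^sup>2" by (simp_all add: algebra_simps)
  then have "k * R\<^sup>2 \<le> A * k" using assms(4) by linarith
  then have "k * R\<^sup>2 \<le> k * A" by (simp add: mult.commute)
  then have "0 \<le> \<rho> powr k * (A - R\<^sup>2)" using assms(3) by simp
  then show ?thesis using profile_lower_bound[OF assms(1-3), of A] by linarith
qed

lemma profile_upper_bound:
  assumes "0 \<le> \<rho>" "\<rho> \<le> R" "k > 0" "A \<ge> 0"
  shows "profile A k \<rho> \<le> A * R powr k"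
proof -
  have "A * \<rho> powr k \<le> A * R powr k" using assms by (intro mult_left_mono powr_mono2) auto
  moreover have "0 \<le> \<rho> powr (k + 2)" by simp
  ultimately show ?thesis unfolding profile_def by linarith
qed

lemma mult_powr_le_profile:
  assumes "0 \<le> \<rho>" "\<rho> \<le> R" "k > 0" "R\<^sup>2 < A" "0 \<le> C"
  shows "C * \<rho> powr k \<le> C / (A - R\<^sup>2) * profile A k \<rho>"
proof -
  have "C * \<rho> powr k = C / (A - R\<^sup>2) * (\<rho> powr k * (A - R\<^sup>2))" using assms(4) by simp
  also have "\<dots> \<le> C / (A - R\<^sup>2) * profile A k \<rho>"
    using profile_lower_bound[OF assms(1-3), of A] assms(4,5) by (intro mult_left_mono) auto
  finally show ?thesis .
qed

lemma profile_r_nonneg: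
  assumes "0 < \<rho>" "\<rho> \<le> R" "k > 0" "(k + 2) * R\<^sup>2 \<le> A * k"
  shows "0 \<le> profile_r A k \<rho>"
proof -
  have "\<rho>\<^sup>2 \<le> R\<^sup>2" using assms by (simp add: power_mono)
  then have "(k + 2) * \<rho>\<^sup>2 \<le> (k + 2) * R\<^sup>2" using assms(3) by simp
  then have "0 \<le> A * k - (k + 2) * \<rho>\<^sup>2" using assms(4) by linarith
  then show ?thesis using assms(1) by (simp add: profile_factored)
qed

lemma cube_of_decreased_ge:
  fixes U a p \<psi> :: real
  assumes "U \<le> 0" "a \<le> 0" "0 \<le> p" "0 \<le> \<psi>"
  shows "U * a ^ 3 - 3 * U * a\<^sup>2 * p - \<psi> * a ^ 3 \<le> (U - \<psi>) * (a - p) ^ 3"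
proof -
  have "(U - \<psi>) * (a - p) ^ 3 - (U * a ^ 3 - 3 * U * a\<^sup>2 * p - \<psi> * a ^ 3)
      = 3 * (U * a) * p\<^sup>2 + (- U) * p ^ 3 + \<psi> * (3 * a\<^sup>2 * p + 3 * (- a) * p\<^sup>2 + p ^ 3)"
    by (simp add: power3_eq_cube power2_eq_square algebra_simps)
  moreover have "0 \<le> 3 * (U * a) * p\<^sup>2" using assms by (simp add: mult_nonpos_nonpos)
  moreover have "0 \<le> (- U) * p ^ 3" using assms by (intro mult_nonneg_nonneg) auto
  moreover have "0 \<le> 3 * (- a) * p\<^sup>2" using assms by (intro mult_nonneg_nonneg) auto
  then have "0 \<le> \<psi> * (3 * a\<^sup>2 * p + 3 * (- a) * p\<^sup>2 + p ^ 3)"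
    using assms by (intro mult_nonneg_nonneg add_nonneg_nonneg) auto
  ultimately show ?thesis by linarith
qed

lemma perturbed_steady_operator_ge_linearized:
  fixes N \<rho> U U1 U2 E \<phi> \<phi>1 \<phi>2 :: real
  assumes steady: "U2 + (N - 1) / \<rho> * U1 + U * U1 ^ 3 = 0"
    and coeff1: "3 * U * U1\<^sup>2 = - (3 * N - 5) / \<rho>"
    and coeff2: "U1 ^ 3 = - (3 * N - 5) / (9 * \<rho>\<^sup>2)"
    and signs: "U \<le> 0" "U1 \<le> 0" "0 \<le> E * \<phi>1" "0 \<le> E * \<phi>"
  shows "- E * (\<phi>2 - (2 * N - 4) / \<rho> * \<phi>1 - (3 * N - 5) / (9 * \<rho>\<^sup>2) * \<phi>)
    \<le> (U2 - E * \<phi>2) + (N - 1) / \<rho> * (U1 - E * \<phi>1) + (U - E * \<phi>) * (U1 - E * \<phi>1) ^ 3"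
proof -
  define a b c where "a = (N - 1) / \<rho>" and "b = (3 * N - 5) / \<rho>" and "c = (3 * N - 5) / (9 * \<rho>\<^sup>2)"
  have d: "(2 * N - 4) / \<rho> = b - a" unfolding a_def b_def by (simp add: diff_divide_distrib[symmetric])
  have "U * U1 ^ 3 - 3 * U * U1\<^sup>2 * (E * \<phi>1) - E * \<phi> * U1 ^ 3
      \<le> (U - E * \<phi>) * (U1 - E * \<phi>1) ^ 3"
    using cube_of_decreased_ge[OF signs] .
  moreover have "3 * U * U1\<^sup>2 * (E * \<phi>1) = - b * (E * \<phi>1)" "E * \<phi> * U1 ^ 3 = - c * (E * \<phi>)"
    unfolding b_def c_def coeff1 coeff2 by (simp_all only: minus_divide_left mult.commute)
  moreover have "U * U1 ^ 3 = - U2 - a * U1" using steady unfolding a_def by simp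
  ultimately show ?thesis unfolding a_def[symmetric] c_def[symmetric] d by (simp add: algebra_simps)
qed

lemma lower_barrier_strict_subsolution:
  fixes A k \<mu> E \<rho> :: real
  assumes n: "n \<ge> 2" and \<rho>: "0 < \<rho>" "\<rho> \<le> R" and E: "E > 0"
    and k: "k > 0" "k\<^sup>2 - (2 * real n - 3) * k - (3 * real n - 5) / 9 = 0"
    and A: "(k + 2) * R\<^sup>2 \<le> A * k" and \<mu>: "0 \<le> \<mu>" "\<mu> * A < 4 * k - 4 * real n + 10"
  shows "\<mu> * (E * profile A k \<rho>) <
    (ustar_rr n \<rho> - E * profile_rr A k \<rho>) + (real n - 1) / \<rho> * (ustar_r n \<rho> - E * profile_r A k \<rho>)
      + (ustar n \<rho> - E * profile A k \<rho>) * (ustar_r n \<rho> - E * profile_r A k \<rho>) ^ 3"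
proof -
  have profile: "0 \<le> profile A k \<rho>" "0 \<le> profile_r A k \<rho>"
    using \<rho> profile_nonneg[OF _ _ k(1) A] profile_r_nonneg[OF _ _ k(1) A] by auto
  have "ustar n \<rho> \<le> 0" using alpha_pos[OF n] \<rho> by (simp add: ustar_def)
  have "- E * (profile_rr A k \<rho> - (2 * real n - 4) / \<rho> * profile_r A k \<rho>
        - (3 * real n - 5) / (9 * \<rho>\<^sup>2) * profile A k \<rho>)
    \<le> (ustar_rr n \<rho> - E * profile_rr A k \<rho>) + (real n - 1) / \<rho> * (ustar_r n \<rho> - E * profile_r A k \<rho>)
      + (ustar n \<rho> - E * profile A k \<rho>) * (ustar_r n \<rho> - E * profile_r A k \<rho>) ^ 3"
    using profile E
    by (intro perturbed_steady_operator_ge_linearized ustar_steady ustar_linearization_coefficients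
        \<rho>(1) \<open>ustar n \<rho> \<le> 0\<close> less_imp_le[OF ustar_r_neg[OF n \<rho>(1)]]) auto
  then have "E * ((4 * k - 4 * real n + 10) * \<rho> powr k)
    \<le> (ustar_rr n \<rho> - E * profile_rr A k \<rho>) + (real n - 1) / \<rho> * (ustar_r n \<rho> - E * profile_r A k \<rho>)
      + (ustar n \<rho> - E * profile A k \<rho>) * (ustar_r n \<rho> - E * profile_r A k \<rho>) ^ 3"
    unfolding profile_linearized[OF \<rho>(1) k(2)] by (simp only: mult_minus_left mult_minus_right minus_minus)
  moreover have "\<mu> * (A - \<rho>\<^sup>2) < 4 * k - 4 * real n + 10"
    using \<mu> by (smt (verit) mult_left_mono zero_le_power2)
  then have "\<mu> * (E * profile A k \<rho>) < E * ((4 * k - 4 * real n + 10) * \<rho> powr k)"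
    using E \<rho> unfolding profile_factored(1)[OF \<rho>(1)] by (simp add: mult.left_commute)
  ultimately show ?thesis by linarith
qed

lemma ustar_minus_initial_le_norm_powr:
  fixes u0 :: "real^'n \<Rightarrow> real"
  assumes n: "CARD('n) \<ge> 2"
    and cont: "continuous_on (cball 0 R - {0}) u0"
    and near_0: "\<exists>M. \<forall>\<^sub>F x in at (0::real^'n).
      \<bar>norm x powr (3/2 - real CARD('n) - nu CARD('n)) * (ustar CARD('n) (norm x) - u0 x)\<bar> \<le> M"
    and u0_0: "u0 0 = 0"
  shows "\<exists>C>0. \<forall>x\<in>cball 0 R. ustar CARD('n) (norm x) - u0 x \<le> C * norm x powr kappa CARD('n)"
proof (rule le_mult_norm_powr_if_bounded_near_0[OF kappa_pos[OF n]])
  show "continuous_on (cball 0 R - {0}) (\<lambda>x. ustar CARD('n) (norm x) - u0 x)"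
    by (intro continuous_intros cont continuous_on_compose2[OF continuous_ustar]) auto
  have "3 / 2 - real CARD('n) - nu CARD('n) = - kappa CARD('n)" by (simp add: kappa_def)
  with near_0 show "\<exists>M. \<forall>\<^sub>F x in at 0.
      \<bar>norm x powr (- kappa CARD('n)) * (ustar CARD('n) (norm x) - u0 x)\<bar> \<le> M"
    by (simp only:)
  show "ustar CARD('n) (norm 0) - u0 0 \<le> 0" using u0_0 by (simp add: ustar_def)
qed

context classical_solution
begin

lemma origin_value_at_time_0:
  assumes "\<forall>t>0. u 0 t = 0"
  shows "u 0 0 = 0"
proof -
  have "continuous_on {0..} ((\<lambda>(x, t). u x t) \<circ> (\<lambda>t. (0::real^'n, t)))"
    by (rule continuous_on_compose[OF _ continuous_on_subset[OF u_cont]])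
      (use R_pos in \<open>auto intro!: continuous_intros\<close>)
  then show ?thesis using eq_at_0_if_continuous_and_const_right[of "\<lambda>t. u 0 t"] assms by (simp add: o_def)
qed

lemma solution_le_ustar:
  assumes n: "CARD('n) \<ge> 2"
    and init: "\<forall>x\<in>cball 0 R. u x 0 \<le> ustar CARD('n) (norm x)"
    and origin: "\<forall>t>0. u 0 t = 0"
    and bdry: "\<forall>t>0. \<forall>x. norm x = R \<longrightarrow> u x t = ustar CARD('n) R"
  shows "\<forall>x\<in>cball 0 R. \<forall>t\<ge>0. u x t \<le> ustar CARD('n) (norm x)"
proof (rule solution_le_supersolution[where W = "\<lambda>t. ustar CARD('n)" and Wr = "\<lambda>t. ustar_r CARD('n)"
      and Wrr = "\<lambda>t. ustar_rr CARD('n)" and Wt = "\<lambda>t \<rho>. 0"])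
  show "continuous_on ({0..} \<times> {0..R}) (\<lambda>(t, \<rho>). ustar CARD('n) \<rho>)"
    by (auto simp: case_prod_beta intro!: continuous_intros continuous_on_compose2[OF continuous_ustar])
  show "\<forall>t>0. \<forall>\<rho>\<in>{0<..<R}. 0 \<ge> ustar_rr CARD('n) \<rho> + (real CARD('n) - 1) / \<rho> * ustar_r CARD('n) \<rho>
      + ustar CARD('n) \<rho> * ustar_r CARD('n) \<rho> ^ 3"
    using ustar_steady by simp
qed (use n init origin bdry ustar_has_real_derivative ustar_r_has_real_derivative ustar_r_neg
  in \<open>auto simp: ustar_def\<close>)

lemma lower_barrier_le_solution:
  fixes A k \<mu> c :: real
  defines "n \<equiv> CARD('n)"
  assumes n: "n \<ge> 2" and k: "k > 0" "k\<^sup>2 - (2 * real n - 3) * k - (3 * real n - 5) / 9 = 0"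
    and A: "(k + 2) * R\<^sup>2 \<le> A * k" and \<mu>: "0 \<le> \<mu>" "\<mu> * A < 4 * k - 4 * real n + 10" and c: "c > 0"
    and init: "\<forall>x\<in>cball 0 R. ustar n (norm x) - c * profile A k (norm x) \<le> u x 0"
    and origin: "\<forall>t>0. u 0 t = 0"
    and bdry: "\<forall>t>0. \<forall>x. norm x = R \<longrightarrow> u x t = ustar n R"
  shows "\<forall>x\<in>cball 0 R. \<forall>t\<ge>0. ustar n (norm x) - c * exp (- \<mu> * t) * profile A k (norm x) \<le> u x t"
proof -
  have profile: "0 \<le> profile A k \<rho>" "0 \<le> profile_r A k \<rho>" if "0 < \<rho>" "\<rho> \<le> R" for \<rho>
    using that profile_nonneg[OF _ _ k(1) A] profile_r_nonneg[OF _ _ k(1) A] by auto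
  show ?thesis
  proof (rule subsolution_le_solution[where
        W = "\<lambda>t \<rho>. ustar n \<rho> - c * exp (- \<mu> * t) * profile A k \<rho>"
        and Wr = "\<lambda>t \<rho>. ustar_r n \<rho> - c * exp (- \<mu> * t) * profile_r A k \<rho>"
        and Wrr = "\<lambda>t \<rho>. ustar_rr n \<rho> - c * exp (- \<mu> * t) * profile_rr A k \<rho>"
        and Wt = "\<lambda>t \<rho>. \<mu> * (c * exp (- \<mu> * t) * profile A k \<rho>)", unfolded n_def[symmetric]])
    show "continuous_on ({0..} \<times> {0..R}) (\<lambda>(t, \<rho>). ustar n \<rho> - c * exp (- \<mu> * t) * profile A k \<rho>)"
      by (auto simp: case_prod_beta intro!: continuous_intros
          continuous_on_compose2[OF continuous_ustar] continuous_on_compose2[OF continuous_on_profile[OF k(1)]])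
    show "\<forall>t>0. \<forall>\<rho>\<in>{0<..<R}. \<mu> * (c * exp (- \<mu> * t) * profile A k \<rho>)
      < ustar_rr n \<rho> - c * exp (- \<mu> * t) * profile_rr A k \<rho>
        + (real n - 1) / \<rho> * (ustar_r n \<rho> - c * exp (- \<mu> * t) * profile_r A k \<rho>)
        + (ustar n \<rho> - c * exp (- \<mu> * t) * profile A k \<rho>)
          * (ustar_r n \<rho> - c * exp (- \<mu> * t) * profile_r A k \<rho>) ^ 3"
      using lower_barrier_strict_subsolution[OF n _ _ _ k A \<mu>] c by simp
    show "\<forall>t>0. \<forall>\<rho>>0. ((\<lambda>\<rho>. ustar n \<rho> - c * exp (- \<mu> * t) * profile A k \<rho>) has_real_derivative
      ustar_r n \<rho> - c * exp (- \<mu> * t) * profile_r A k \<rho>) (at \<rho>)"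
      by (intro allI impI DERIV_diff DERIV_cmult ustar_has_real_derivative profile_has_real_derivative)
    show "\<forall>t>0. \<forall>\<rho>>0. ((\<lambda>\<rho>. ustar_r n \<rho> - c * exp (- \<mu> * t) * profile_r A k \<rho>) has_real_derivative
      ustar_rr n \<rho> - c * exp (- \<mu> * t) * profile_rr A k \<rho>) (at \<rho>)"
      by (intro allI impI DERIV_diff DERIV_cmult ustar_r_has_real_derivative profile_r_has_real_derivative)
    show "\<forall>t>0. \<forall>\<rho>>0. ((\<lambda>s. ustar n \<rho> - c * exp (- \<mu> * s) * profile A k \<rho>) has_real_derivative
      \<mu> * (c * exp (- \<mu> * t) * profile A k \<rho>)) (at t)"
      by (auto intro!: derivative_eq_intros)
    show "\<forall>t>0. \<forall>\<rho>\<in>{0<..<R}. ustar_r n \<rho> - c * exp (- \<mu> * t) * profile_r A k \<rho> \<le> 0"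
      using ustar_r_neg[OF n] profile c by (smt (verit) greaterThanLessThan_iff mult_nonneg_nonneg exp_gt_zero)
    show "\<forall>x\<in>cball 0 R. ustar n (norm x) - c * exp (- \<mu> * 0) * profile A k (norm x) \<le> u x 0"
      using init by simp
    show "\<forall>t>0. ustar n 0 - c * exp (- \<mu> * t) * profile A k 0 \<le> u 0 t"
      using origin by (simp add: ustar_def profile_def)
    show "\<forall>t>0. \<forall>x. norm x = R \<longrightarrow> ustar n R - c * exp (- \<mu> * t) * profile A k R \<le> u x t"
      using bdry profile(1)[of R] R_pos c by simp
  qed
qed

lemma exponential_convergence_to_ustar:
  defines "n \<equiv> CARD('n)"
  assumes n: "n \<ge> 2"
    and init_upper: "\<forall>x\<in>cball 0 R. u x 0 \<le> ustar n (norm x)"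
    and init_lower: "\<exists>C>0. \<forall>x\<in>cball 0 R. ustar n (norm x) - u x 0 \<le> C * norm x powr kappa n"
    and origin: "\<forall>t>0. u 0 t = 0"
    and bdry: "\<forall>t>0. \<forall>x. norm x = R \<longrightarrow> u x t = ustar n R"
  shows "\<exists>c>0. \<exists>\<mu>>0. \<forall>t\<ge>0. \<forall>x\<in>cball 0 R. \<bar>u x t - ustar n (norm x)\<bar> \<le> c * exp (- \<mu> * t)"
proof -
  define k where "k = kappa n"
  define A where "A = (k + 2) / k * R\<^sup>2"
  define \<mu> where "\<mu> = 1 / A"
  have k: "k > 0" using kappa_pos[OF n] by (simp add: k_def)
  have A: "(k + 2) * R\<^sup>2 \<le> A * k" "R\<^sup>2 < A" using k R_pos by (simp_all add: A_def field_simps)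
  then have "A > 0" by (smt (verit) zero_le_power2)
  then have \<mu>: "0 < \<mu>" "\<mu> * A < 4 * k - 4 * real n + 10"
    using kappa_gap[OF n] by (simp_all add: \<mu>_def k_def)
  obtain C where C: "C > 0" "\<forall>x\<in>cball 0 R. ustar n (norm x) - u x 0 \<le> C * norm x powr k"
    using init_lower unfolding k_def by blast
  define c where "c = C / (A - R\<^sup>2)"
  have c: "c > 0" using C(1) A(2) by (simp add: c_def)
  have "\<forall>x\<in>cball 0 R. ustar n (norm x) - c * profile A k (norm x) \<le> u x 0"
  proof
    fix x :: "real^'n" assume x: "x \<in> cball 0 R"
    then have "C * norm x powr k \<le> c * profile A k (norm x)"
      using mult_powr_le_profile[where R = R and C = C, OF _ _ k A(2)] C(1) by (simp add: c_def)
    then show "ustar n (norm x) - c * profile A k (norm x) \<le> u x 0" using C(2) x by fastforce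
  qed
  then have lower:
    "\<forall>x\<in>cball 0 R. \<forall>t\<ge>0. ustar n (norm x) - c * exp (- \<mu> * t) * profile A k (norm x) \<le> u x t"
    using lower_barrier_le_solution[folded n_def, OF n k kappa_quadratic[OF n, folded k_def] A(1)
        less_imp_le[OF \<mu>(1)] \<mu>(2) c] origin bdry by blast
  have upper: "\<forall>x\<in>cball 0 R. \<forall>t\<ge>0. u x t \<le> ustar n (norm x)"
    using solution_le_ustar n init_upper origin bdry unfolding n_def by blast
  have "\<bar>u x t - ustar n (norm x)\<bar> \<le> c * A * R powr k * exp (- \<mu> * t)"
    if "x \<in> cball 0 R" "t \<ge> 0" for x t
  proof -
    have "profile A k (norm x) \<le> A * R powr k"
      using profile_upper_bound[of "norm x" R k A] that k \<open>A > 0\<close> by simp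
    then have "c * exp (- \<mu> * t) * profile A k (norm x) \<le> c * A * R powr k * exp (- \<mu> * t)"
      using c by (simp add: mult_left_mono algebra_simps)
    then show ?thesis using lower upper that by fastforce
  qed
  moreover have "c * A * R powr k > 0" using c \<open>A > 0\<close> R_pos by simp
  ultimately show ?thesis using \<mu>(1) by blast
qed

end

text \<open>
  Of the hypotheses on the data the barriers only need continuity of \<open>u0\<close>, (C3) and (C4).
\<close>

theorem theorem3:
  fixes u0 :: "real^'n \<Rightarrow> real"
    and Du0 :: "real^'n \<Rightarrow> real^'n"
    and D2u0 :: "real^'n \<Rightarrow> real^'n^'n"
    and u :: "real^'n \<Rightarrow> real \<Rightarrow> real"
    and Du :: "real^'n \<Rightarrow> real \<Rightarrow> real^'n"
    and D2u :: "real^'n \<Rightarrow> real \<Rightarrow> real^'n^'n"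
    and ut :: "real^'n \<Rightarrow> real \<Rightarrow> real"
    and R :: real
  assumes dim: "CARD('n) \<ge> 2"
    and R_pos: "0 < R"
    and R_small: "R < sqrt (3/8 * (3 * real CARD('n) - 5) * (2 * real CARD('n) - 3)^3)"
    \<comment> \<open>(C1): u0 is C^2 on the closed ball minus the origin\<close>
    and C1_cont: "continuous_on (cball 0 R - {0}) u0"
    and C1_cont1: "continuous_on (cball 0 R - {0}) Du0"
    and C1_cont2: "continuous_on (cball 0 R - {0}) D2u0"
    and C1_d1: "\<forall>x\<in>ball 0 R - {0}. (u0 has_derivative (\<lambda>h. Du0 x \<bullet> h)) (at x)"
    and C1_d2: "\<forall>x\<in>ball 0 R - {0}. (Du0 has_derivative (\<lambda>h. D2u0 x *v h)) (at x)"
    \<comment> \<open>(C2): radial symmetry\<close>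
    and C2: "\<forall>x\<in>cball 0 R. \<forall>y\<in>cball 0 R. norm x = norm y \<longrightarrow> u0 x = u0 y"
    \<comment> \<open>(C3)\<close>
    and C3: "\<forall>x\<in>cball 0 R. u0 x \<le> ustar CARD('n) (norm x)"
    \<comment> \<open>(C4): the limsup as r -> 0 is finite\<close>
    and C4: "\<exists>M. \<forall>\<^sub>F x in at (0::real^'n).
               \<bar>norm x powr (3/2 - real CARD('n) - nu CARD('n)) * (ustar CARD('n) (norm x) - u0 x)\<bar> \<le> M"
    \<comment> \<open>(C5)\<close>
    and C5: "\<forall>x. norm x = R \<longrightarrow> u0 x = ustar CARD('n) R"
    \<comment> \<open>(C6): bounds on the radial derivative\<close>
    and C6: "\<exists>C>0. \<forall>x. 0 < norm x \<and> norm x < R \<longrightarrow>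
               Du0 x \<bullet> (x /\<^sub>R norm x) \<le> 0 \<and> Du0 x \<bullet> (x /\<^sub>R norm x) \<ge> - C * norm x powr (-2/3)"
    \<comment> \<open>u is the classical solution of the problem\<close>
    and u_cont: "continuous_on (cball 0 R \<times> {0..}) (\<lambda>(x, t). u x t)"
    and u_diff: "\<forall>x t. x \<in> ball 0 R - {0} \<and> t > 0 \<longrightarrow>
               ((\<lambda>y. u y t) has_derivative (\<lambda>h. Du x t \<bullet> h)) (at x) \<and>
               ((\<lambda>y. Du y t) has_derivative (\<lambda>h. D2u x t *v h)) (at x) \<and>
               ((\<lambda>s. u x s) has_real_derivative ut x t) (at t)"
    and u_cont1: "continuous_on ((ball 0 R - {0}) \<times> {0<..}) (\<lambda>(x, t). Du x t)"
    and u_cont2: "continuous_on ((ball 0 R - {0}) \<times> {0<..}) (\<lambda>(x, t). D2u x t)"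
    and u_contt: "continuous_on ((ball 0 R - {0}) \<times> {0<..}) (\<lambda>(x, t). ut x t)"
    and pde: "\<forall>x t. x \<in> ball 0 R - {0} \<and> t > 0 \<longrightarrow>
               ut x t = (\<Sum>i\<in>UNIV. D2u x t $ i $ i) + u x t * (Du x t \<bullet> (x /\<^sub>R norm x)) ^ 3"
    and bc0: "\<forall>t>0. u 0 t = 0"
    and bcR: "\<forall>t>0. \<forall>x. norm x = R \<longrightarrow> u x t = ustar CARD('n) R"
    and ic: "\<forall>x\<in>cball 0 R. u x 0 = u0 x"
    and u_r_nonpos: "\<forall>x t. x \<in> ball 0 R - {0} \<and> t > 0 \<longrightarrow> Du x t \<bullet> (x /\<^sub>R norm x) \<le> 0"
  shows "uniform_limit (ball 0 R) (\<lambda>t x. u x t) (\<lambda>x. ustar CARD('n) (norm x)) at_top \<and>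
         (\<exists>c>0. \<exists>\<mu>>0. \<forall>t\<ge>0. \<forall>x\<in>ball 0 R. \<bar>u x t - ustar CARD('n) (norm x)\<bar> \<le> c * exp (- \<mu> * t))"
proof -
  interpret classical_solution R u Du D2u ut
    using R_pos u_cont u_diff pde by unfold_locales
  have "u0 0 = 0" using origin_value_at_time_0[OF bc0] ic R_pos by simp
  from ustar_minus_initial_le_norm_powr[OF dim C1_cont C4 this] obtain C where C: "C > 0"
    "\<forall>x\<in>cball 0 R. ustar CARD('n) (norm x) - u0 x \<le> C * norm x powr kappa CARD('n)"
    by blast
  then have init_lower:
    "\<exists>C>0. \<forall>x\<in>cball 0 R. ustar CARD('n) (norm x) - u x 0 \<le> C * norm x powr kappa CARD('n)"
    using ic by (metis (no_types, lifting))
  have init_upper: "\<forall>x\<in>cball 0 R. u x 0 \<le> ustar CARD('n) (norm x)" using C3 ic by simp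
  obtain c \<mu> where c: "c > 0" "\<mu> > 0"
    and bound: "\<forall>t\<ge>0. \<forall>x\<in>cball 0 R. \<bar>u x t - ustar CARD('n) (norm x)\<bar> \<le> c * exp (- \<mu> * t)"
    using exponential_convergence_to_ustar[OF dim init_upper init_lower bc0 bcR] by blast
  then have ball_bound:
    "\<forall>t\<ge>0. \<forall>x\<in>ball 0 R. \<bar>u x t - ustar CARD('n) (norm x)\<bar> \<le> c * exp (- \<mu> * t)"
    by auto
  have "uniform_limit (ball 0 R) (\<lambda>t x. u x t) (\<lambda>x. ustar CARD('n) (norm x)) at_top"
    by (rule uniform_limit_if_exp_bound[OF c(2) ball_bound])
  with c ball_bound show ?thesis by blast
qed

end
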